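(* Let $\sigma=(a_1,\ldots,a_s)$ be a partition of $r$ with $d=\gcd(a_1,\ldots,a_s)\ge2$, let $q=md+t$ with $0\le t\le d-1$, and let $H=H(n,r,q\mid\sigma)$. Let $H_m=H(n,r,md\mid\sigma)$, viewed as obtained from $H$ by deleting the top $t$ vertices of every class. Let $\sigma^*=(a_1/d,\ldots,a_s/d)$, a partition of $r/d$, and $H^*=H(n,r/d,m\mid\sigma^* )$. Then: (1) for every maximum matching $M$ of $H$ there is a matching $M^*$ of $H^*$ with $|M^*|=|M|$; (2) for every maximum matching $M^*$ of $H^*$ there is a matching $M$ of $H$ with $|M|=|M^*|$; (3) consequently $\nu(H)=\nu(H_m)=\nu(H^* )$.
   Context: A $\sigma$-hypergraph $H=H(n,r,q\mid\sigma)$, for a partition $\sigma$ of $r$, is the $r$-uniform hypergraph whose vertex set is the disjoint union of $n$ classes $V_1,\ldots,V_n$, each of size $q$; an $r$-subset $K$ of vertices is an edge iff the multiset of non-zero values $|K\cap V_i|$ equals $\sigma$. The vertices of each class are ordered $v_{1,i},\ldots,v_{q,i}$, and the top $t$ vertices of $V_i$ are $v_{1,i},\ldots,v_{t,i}$. A matching is a set of pairwise vertex-disjoint edges; $\nu(\cdot)$ denotes the maximum size of a matching. *)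

theory Defs
  imports Main "HOL-Library.Multiset" "HOL-Library.Disjoint_Sets"
begin

definition is_partition :: "nat multiset \<Rightarrow> nat \<Rightarrow> bool" where
  "is_partition \<sigma> r \<longleftrightarrow> (\<forall>a\<in>#\<sigma>. a > 0) \<and> sum_mset \<sigma> = r"

text \<open>Vertices of H(n,r,q|sigma): pair (i, j) is the vertex v_{j+1,i+1}, i.e. class i < n,
  position j < q within the class (position 0 is the top vertex).\<close>
definition sclass :: "nat \<Rightarrow> nat \<Rightarrow> (nat \<times> nat) set" where
  "sclass q i = {i} \<times> {..<q}"

definition sverts :: "nat \<Rightarrow> nat \<Rightarrow> (nat \<times> nat) set" where
  "sverts n q = {..<n} \<times> {..<q}"

definition profile :: "nat \<Rightarrow> nat \<Rightarrow> (nat \<times> nat) set \<Rightarrow> nat multiset" where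
  "profile n q K = filter_mset (\<lambda>k. k \<noteq> 0)
      (image_mset (\<lambda>i. card (K \<inter> sclass q i)) (mset_set {..<n}))"

definition sigma_hg :: "nat \<Rightarrow> nat \<Rightarrow> nat \<Rightarrow> nat multiset \<Rightarrow> (nat \<times> nat) set set" where
  "sigma_hg n r q \<sigma> = {K. K \<subseteq> sverts n q \<and> card K = r \<and> profile n q K = \<sigma>}"

definition matching :: "'v set set \<Rightarrow> 'v set set \<Rightarrow> bool" where
  "matching E M \<longleftrightarrow> M \<subseteq> E \<and> disjoint M"

definition max_matching :: "'v set set \<Rightarrow> 'v set set \<Rightarrow> bool" where
  "max_matching E M \<longleftrightarrow> matching E M \<and> (\<forall>M'. matching E M' \<longrightarrow> card M' \<le> card M)"

definition nu :: "'v set set \<Rightarrow> nat" where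
  "nu E = Max (card ` {M. matching E M})"

end

theory Submission
  imports Defs
begin

text \<open>Every edge of \<open>H\<close> meets each class in a multiple of \<open>d\<close> vertices. Taking the edges of a
  matching of \<open>H\<close> one at a time, an edge meeting \<open>V\<^sub>i\<close> in \<open>k d\<close> vertices is replaced by the
  \<open>k\<close> positions of class \<open>i\<close> directly above those already used. As at most \<open>q\<close> vertices of
  \<open>V\<^sub>i\<close> are covered, no position beyond \<open>\<lfloor>q/d\<rfloor> = m\<close> is needed, so this yields a matching of
  \<open>H\<^sup>*\<close> of the same size. Conversely, replacing each vertex \<open>(i, j)\<close> of \<open>H\<^sup>*\<close> by the \<open>d\<close>
  vertices \<open>(i, j d), \<dots>, (i, j d + d - 1)\<close> turns a matching of \<open>H\<^sup>*\<close> into one of \<open>H\<^sub>m\<close>, a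
  subhypergraph of \<open>H\<close>. Hence \<open>\<nu>(H) \<le> \<nu>(H\<^sup>*) \<le> \<nu>(H\<^sub>m) \<le> \<nu>(H)\<close>.\<close>

lemma sum_mset_filter_nonzero: "sum_mset (filter_mset (\<lambda>k. k \<noteq> 0) (X :: nat multiset)) = sum_mset X"
  by (induction X) auto

lemma finite_sverts: "finite (sverts n q)"
  by (simp add: sverts_def)

lemma card_sclass: "card (sclass q i) = q"
  by (simp add: sclass_def)

lemma card_eq_sum_profile:
  assumes "K \<subseteq> sverts n q"
  shows "card K = sum_mset (profile n q K)"
proof -
  have "K = (\<Union>i<n. K \<inter> sclass q i)"
    using assms by (auto simp: sverts_def sclass_def)
  also have "card \<dots> = (\<Sum>i<n. card (K \<inter> sclass q i))"
    using finite_subset[OF assms finite_sverts]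
    by (intro card_UN_disjoint) (auto simp: sclass_def)
  also have "\<dots> = sum_mset (profile n q K)"
    unfolding profile_def sum_mset_filter_nonzero by (simp add: sum_unfold_sum_mset)
  finally show ?thesis .
qed

lemma filter_nonzero_image_mset_comp:
  fixes g h :: "'a \<Rightarrow> nat" and f :: "nat \<Rightarrow> nat"
  assumes "\<And>x. x \<in># A \<Longrightarrow> g x = f (h x)"
    and "\<And>x. x \<in># A \<Longrightarrow> f (h x) = 0 \<longleftrightarrow> h x = 0"
  shows "filter_mset (\<lambda>k. k \<noteq> 0) (image_mset g A)
       = image_mset f (filter_mset (\<lambda>k. k \<noteq> 0) (image_mset h A))"
  using assms by (induction A) (auto, metis)

lemma profile_eq_image_mset:
  assumes "\<And>i. i < n \<Longrightarrow> card (K' \<inter> sclass q' i) = f (card (K \<inter> sclass q i))"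
    and "\<And>i. i < n \<Longrightarrow> f (card (K \<inter> sclass q i)) = 0 \<longleftrightarrow> card (K \<inter> sclass q i) = 0"
  shows "profile n q' K' = image_mset f (profile n q K)"
  unfolding profile_def using assms by (intro filter_nonzero_image_mset_comp) auto

lemma mem_profile_nonzero: "k \<in># profile n q K \<Longrightarrow> k \<noteq> 0"
  by (simp add: profile_def)

lemma card_Int_sclass_in_profile:
  assumes "i < n" "card (K \<inter> sclass q i) \<noteq> 0"
  shows "card (K \<inter> sclass q i) \<in># profile n q K"
  using assms by (simp add: profile_def)

lemma sigma_hg_transfer:
  assumes "K \<in> sigma_hg n r q \<sigma>" "K' \<subseteq> sverts n q'"
    and "\<And>i. i < n \<Longrightarrow> card (K' \<inter> sclass q' i) = f (card (K \<inter> sclass q i))"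
    and "f 0 = 0" "\<And>k. k \<in># \<sigma> \<Longrightarrow> f k \<noteq> 0"
  shows "K' \<in> sigma_hg n (sum_mset (image_mset f \<sigma>)) q' (image_mset f \<sigma>)"
proof -
  have "\<sigma> = profile n q K"
    using assms(1) by (simp add: sigma_hg_def)
  then have "profile n q' K' = image_mset f \<sigma>"
    using assms(3-5) card_Int_sclass_in_profile by (metis profile_eq_image_mset)
  then show ?thesis
    using assms(2) card_eq_sum_profile[OF assms(2)] by (simp add: sigma_hg_def)
qed

lemma dvd_card_Int_sclass:
  assumes "K \<in> sigma_hg n r q \<sigma>" "\<forall>a\<in>#\<sigma>. d dvd a"
  shows "d dvd card (K \<inter> sclass q i)"
proof (cases "i < n \<and> card (K \<inter> sclass q i) \<noteq> 0")
  case True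
  then show ?thesis
    using assms card_Int_sclass_in_profile by (auto simp: sigma_hg_def)
next
  case False
  moreover have "K \<inter> sclass q i = {}" if "n \<le> i"
    using assms(1) that by (auto simp: sigma_hg_def sverts_def sclass_def)
  ultimately show ?thesis
    by (metis card.empty dvd_0_right not_le)
qed

lemma sum_mset_image_div:
  fixes \<sigma> :: "nat multiset"
  assumes "\<forall>a\<in>#\<sigma>. d dvd a"
  shows "sum_mset (image_mset (\<lambda>a. a div d) \<sigma>) = sum_mset \<sigma> div d"
  using assms by (induction \<sigma>) (auto simp: div_plus_div_distrib_dvd_left)

lemma div_pos_if_dvd_partition:
  assumes "is_partition \<sigma> r" "\<sigma> \<noteq> {#}" "\<forall>a\<in>#\<sigma>. d dvd a"
  shows "0 < r div d"
proof -
  obtain a where a: "a \<in># \<sigma>"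
    using assms(2) by blast
  then have "0 < a"
    using assms(1) by (simp add: is_partition_def)
  then have "0 < d" "d \<le> a"
    using a assms(3) by (auto intro: dvd_imp_le dvd_pos_nat)
  moreover have "a \<le> r"
    using assms(1) a by (metis is_partition_def le_add1 sum_mset.remove)
  ultimately show ?thesis
    by (simp add: div_greater_zero_iff)
qed

lemma finite_sigma_hg: "finite (sigma_hg n r q \<sigma>)"
  by (rule finite_subset[of _ "Pow (sverts n q)"]) (auto simp: sigma_hg_def finite_sverts)

lemma sigma_hg_mono:
  assumes "q' \<le> q"
  shows "sigma_hg n r q' \<sigma> \<subseteq> sigma_hg n r q \<sigma>"
proof
  fix K assume K: "K \<in> sigma_hg n r q' \<sigma>"
  then have "K \<subseteq> sverts n q'"
    by (simp add: sigma_hg_def)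
  then have "K \<inter> sclass q i = K \<inter> sclass q' i" for i
    using assms by (auto simp: sverts_def sclass_def)
  then have "profile n q K = profile n q' K"
    by (simp add: profile_def)
  with K assms show "K \<in> sigma_hg n r q \<sigma>"
    by (auto simp: sigma_hg_def sverts_def)
qed

lemma matching_empty: "matching E {}"
  by (simp add: matching_def)

lemma matching_mono: "E \<subseteq> E' \<Longrightarrow> matching E M \<Longrightarrow> matching E' M"
  by (auto simp: matching_def)

lemma matching_insertD: "matching E (insert K M) \<Longrightarrow> matching E M"
  by (auto simp: matching_def intro: pairwise_subset)

lemma matching_insert_disjoint: "matching E (insert K M) \<Longrightarrow> K \<notin> M \<Longrightarrow> K \<inter> \<Union>M = {}"
  by (auto simp: matching_def pairwise_insert disjnt_def)

lemma matching_insertI: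
  assumes "matching E M" "K \<in> E" "\<And>K'. K' \<in> M \<Longrightarrow> K \<inter> K' = {}"
  shows "matching E (insert K M)"
  using assms by (auto simp: matching_def pairwise_insert disjnt_def Int_commute)

lemma finite_matching: "finite E \<Longrightarrow> matching E M \<Longrightarrow> finite M"
  by (auto simp: matching_def intro: finite_subset)

lemma finite_matchings: "finite E \<Longrightarrow> finite {M. matching E M}"
  by (auto simp: matching_def intro: finite_subset[of _ "Pow E"])

lemma nu_le_nu:
  assumes "finite E" "finite E'"
    and "\<And>M. matching E M \<Longrightarrow> \<exists>M'. matching E' M' \<and> card M' = card M"
  shows "nu E \<le> nu E'"
proof -
  have "nu E \<in> card ` {M. matching E M}"
    unfolding nu_def using finite_matchings[OF assms(1)] matching_empty by (intro Max_in) auto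
  then obtain M where "matching E M" "card M = nu E"
    by auto
  then obtain M' where "matching E' M'" "card M' = nu E"
    using assms(3) by metis
  then show ?thesis
    unfolding nu_def using finite_matchings[OF assms(2)]
    by (metis (mono_tags, lifting) Max_ge finite_imageI image_eqI mem_Collect_eq)
qed

definition blow_up :: "nat \<Rightarrow> (nat \<times> nat) set \<Rightarrow> (nat \<times> nat) set" where
  "blow_up d A = {(i, k). (i, k div d) \<in> A}"

lemma blow_up_eq_image:
  assumes "0 < d"
  shows "blow_up d A = (\<lambda>((i, j), l). (i, j * d + l)) ` (A \<times> {..<d})"
proof (rule set_eqI, clarify)
  fix i k
  show "(i, k) \<in> blow_up d A \<longleftrightarrow> (i, k) \<in> (\<lambda>((i, j), l). (i, j * d + l)) ` (A \<times> {..<d})"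
  proof
    assume "(i, k) \<in> blow_up d A"
    then have "((i, k div d), k mod d) \<in> A \<times> {..<d}"
      using assms by (simp add: blow_up_def)
    then show "(i, k) \<in> (\<lambda>((i, j), l). (i, j * d + l)) ` (A \<times> {..<d})"
      by (rule rev_image_eqI) simp
  qed (auto simp: blow_up_def)
qed

lemma card_blow_up:
  assumes "0 < d" "finite A"
  shows "card (blow_up d A) = d * card A"
proof -
  have "inj_on (\<lambda>((i, j), l). (i, j * d + l)) (A \<times> {..<d})"
  proof (rule inj_onI, clarsimp)
    fix i j l j' l' assume "l < d" "l' < d" "j * d + l = j' * d + l'"
    then have "(j * d + l) div d = (j' * d + l') div d" "(j * d + l) mod d = (j' * d + l') mod d"
      by simp_all
    then show "j = j' \<and> l = l'"
      using \<open>l < d\<close> \<open>l' < d\<close> by simp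
  qed
  then show ?thesis
    using assms by (simp add: blow_up_eq_image card_image card_cartesian_product)
qed

lemma blow_up_empty [simp]: "blow_up d {} = {}"
  by (simp add: blow_up_def)

lemma blow_up_Int: "blow_up d (A \<inter> B) = blow_up d A \<inter> blow_up d B"
  by (auto simp: blow_up_def)

lemma inj_blow_up: assumes "0 < d" shows "inj (blow_up d)"
proof (rule injI)
  fix A B assume "blow_up d A = blow_up d B"
  then have "(i, j * d) \<in> blow_up d A \<longleftrightarrow> (i, j * d) \<in> blow_up d B" for i j by simp
  then show "A = B" using assms by (auto simp: blow_up_def)
qed

lemma blow_up_Int_sclass:
  assumes "0 < d"
  shows "blow_up d A \<inter> sclass (m * d) i = blow_up d (A \<inter> sclass m i)"
  using assms by (auto simp: blow_up_def sclass_def less_mult_imp_div_less div_less_iff_less_mult)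

lemma blow_up_subset_sverts:
  assumes "0 < d" "A \<subseteq> sverts n m"
  shows "blow_up d A \<subseteq> sverts n (m * d)"
  using assms by (auto simp: blow_up_def sverts_def div_less_iff_less_mult)

lemma blow_up_in_sigma_hg:
  assumes "0 < d" "K \<in> sigma_hg n r m \<tau>"
  shows "blow_up d K \<in> sigma_hg n (d * r) (m * d) (image_mset ((*) d) \<tau>)"
proof -
  have K: "K \<subseteq> sverts n m" "profile n m K = \<tau>" "card K = r"
    using assms(2) by (auto simp: sigma_hg_def)
  have "finite K"
    using K(1) finite_sverts finite_subset by blast
  then have "card (blow_up d K \<inter> sclass (m * d) i) = d * card (K \<inter> sclass m i)" for i
    using assms(1) by (simp add: blow_up_Int_sclass card_blow_up)
  moreover have "k \<noteq> 0" if "k \<in># \<tau>" for k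
    using that K(2) mem_profile_nonzero by blast
  ultimately have "blow_up d K \<in> sigma_hg n (sum_mset (image_mset ((*) d) \<tau>)) (m * d) (image_mset ((*) d) \<tau>)"
    using assms blow_up_subset_sverts[OF assms(1) K(1)] by (intro sigma_hg_transfer) auto
  moreover have "sum_mset (image_mset ((*) d) \<tau>) = d * sum_mset \<tau>"
    by (induction \<tau>) (auto simp: algebra_simps)
  moreover have "sum_mset \<tau> = r"
    using K card_eq_sum_profile by metis
  ultimately show ?thesis by simp
qed

lemma matching_blow_up:
  assumes "0 < d" "matching (sigma_hg n r m \<tau>) M"
  shows "matching (sigma_hg n (d * r) (m * d) (image_mset ((*) d) \<tau>)) (blow_up d ` M)"
  using assms blow_up_in_sigma_hg
  by (auto simp: matching_def pairwise_image disjnt_def blow_up_Int[symmetric]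
      elim!: pairwise_mono)

lemma card_image_blow_up: "0 < d \<Longrightarrow> card (blow_up d ` M) = card M"
  by (simp add: card_image inj_on_subset[OF inj_blow_up])

lemma matching_expand:
  assumes "0 < d" "\<forall>a\<in>#\<sigma>. d dvd a" "sum_mset \<sigma> = r"
    and "matching (sigma_hg n (r div d) m (image_mset (\<lambda>a. a div d) \<sigma>)) M'"
  shows "\<exists>M. matching (sigma_hg n r (m * d) \<sigma>) M \<and> card M = card M'"
proof -
  have "image_mset ((*) d) (image_mset (\<lambda>a. a div d) \<sigma>) = \<sigma>"
    using assms(2) by (induction \<sigma>) auto
  moreover have "d dvd sum_mset \<sigma>"
    using assms(2) by (induction \<sigma>) auto
  ultimately show ?thesis
    using matching_blow_up[OF assms(1,4)] card_image_blow_up[OF assms(1)] assms(3) by auto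
qed

definition band :: "nat \<Rightarrow> (nat \<Rightarrow> nat) \<Rightarrow> (nat \<Rightarrow> nat) \<Rightarrow> (nat \<times> nat) set" where
  "band n lo hi = {(i, j). i < n \<and> lo i \<le> j \<and> j < hi i}"

lemma card_band_Int_sclass:
  assumes "i < n" "hi i \<le> q"
  shows "card (band n lo hi \<inter> sclass q i) = hi i - lo i"
proof -
  have "band n lo hi \<inter> sclass q i = {i} \<times> {lo i..<hi i}"
    using assms by (auto simp: band_def sclass_def)
  then show ?thesis by simp
qed

lemma band_subset_sverts: "(\<And>i. i < n \<Longrightarrow> hi i \<le> q) \<Longrightarrow> band n lo hi \<subseteq> sverts n q"
  unfolding band_def sverts_def using less_le_trans by blast

lemma band_on_top_in_sigma_hg:
  assumes K: "K \<in> sigma_hg n r q \<sigma>" and U: "U \<subseteq> sverts n q" "K \<inter> U = {}"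
    and dvd: "\<forall>a\<in>#\<sigma>. d dvd a"
  shows "band n (\<lambda>i. card (U \<inter> sclass q i) div d) (\<lambda>i. card ((K \<union> U) \<inter> sclass q i) div d)
           \<in> sigma_hg n (r div d) (q div d) (image_mset (\<lambda>a. a div d) \<sigma>)"
proof -
  define lo where "lo = (\<lambda>i. card (U \<inter> sclass q i) div d)"
  define hi where "hi = (\<lambda>i. card ((K \<union> U) \<inter> sclass q i) div d)"
  have K': "K \<subseteq> sverts n q" "profile n q K = \<sigma>" "card K = r"
    using K by (auto simp: sigma_hg_def)
  have fin: "finite K" "finite U"
    using K'(1) U(1) finite_sverts finite_subset by blast+
  have hi_le: "hi i \<le> q div d" for i
  proof -
    have "card ((K \<union> U) \<inter> sclass q i) \<le> card (sclass q i)"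
      by (rule card_mono) (auto simp: sclass_def)
    then show ?thesis
      unfolding hi_def card_sclass by (rule div_le_mono)
  qed
  have "hi i - lo i = card (K \<inter> sclass q i) div d" for i
  proof -
    have "card ((K \<union> U) \<inter> sclass q i) = card (K \<inter> sclass q i) + card (U \<inter> sclass q i)"
      using fin U(2) by (subst card_Un_disjoint[symmetric]) (auto intro: arg_cong[where f = card])
    then show ?thesis
      unfolding hi_def lo_def
      using dvd_card_Int_sclass[OF K dvd] by (simp add: div_plus_div_distrib_dvd_left)
  qed
  then have "card (band n lo hi \<inter> sclass (q div d) i) = card (K \<inter> sclass q i) div d" if "i < n" for i
    using that hi_le by (simp add: card_band_Int_sclass)
  moreover have "k div d \<noteq> 0" if "k \<in># \<sigma>" for k
    using that dvd K'(2) by (metis dvd_div_eq_0_iff mem_profile_nonzero)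
  moreover have "sum_mset (image_mset (\<lambda>a. a div d) \<sigma>) = r div d"
    using dvd K' card_eq_sum_profile sum_mset_image_div by metis
  ultimately have "band n lo hi
      \<in> sigma_hg n (sum_mset (image_mset (\<lambda>a. a div d) \<sigma>)) (q div d) (image_mset (\<lambda>a. a div d) \<sigma>)"
    using hi_le by (intro sigma_hg_transfer[OF K band_subset_sverts]) auto
  with \<open>sum_mset (image_mset (\<lambda>a. a div d) \<sigma>) = r div d\<close> show ?thesis
    by (simp add: lo_def hi_def)
qed

lemma matching_compress_stacked:
  assumes "matching (sigma_hg n r q \<sigma>) M" "0 < r div d" "\<forall>a\<in>#\<sigma>. d dvd a"
  shows "\<exists>M'. matching (sigma_hg n (r div d) (q div d) (image_mset (\<lambda>a. a div d) \<sigma>)) M'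
           \<and> card M' = card M \<and> (\<forall>(i, j)\<in>\<Union>M'. j < card (\<Union>M \<inter> sclass q i) div d)"
  using finite_matching[OF finite_sigma_hg assms(1)] assms(1)
proof (induction M rule: finite_induct)
  case empty
  then show ?case
    using matching_empty by fastforce
next
  case (insert K M)
  let ?Hs = "sigma_hg n (r div d) (q div d) (image_mset (\<lambda>a. a div d) \<sigma>)"
  obtain M' where M': "matching ?Hs M'" "card M' = card M"
    "\<forall>(i, j)\<in>\<Union>M'. j < card (\<Union>M \<inter> sclass q i) div d"
    using insert.IH[OF matching_insertD[OF insert.prems]] by blast
  have K: "K \<in> sigma_hg n r q \<sigma>"
    using insert.prems by (simp add: matching_def)
  have U: "\<Union>M \<subseteq> sverts n q"
    using insert.prems by (auto simp: matching_def sigma_hg_def)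
  have disj: "K \<inter> \<Union>M = {}"
    using insert.prems insert.hyps(2) by (rule matching_insert_disjoint)
  define lo where "lo = (\<lambda>i. card (\<Union>M \<inter> sclass q i) div d)"
  define hi where "hi = (\<lambda>i. card (\<Union>(insert K M) \<inter> sclass q i) div d)"
  define B where "B = band n lo hi"
  have B: "B \<in> ?Hs"
    using band_on_top_in_sigma_hg[OF K U disj assms(3)] by (simp add: B_def lo_def hi_def)
  have below_lo: "j < lo i" if "(i, j) \<in> \<Union>M'" for i j
    using M'(3) that by (auto simp: lo_def)
  have B_disj: "B \<inter> K' = {}" if "K' \<in> M'" for K'
    using below_lo that by (fastforce simp: B_def band_def)
  have "B \<noteq> {}"
    using B assms(2) by (auto simp: sigma_hg_def)
  then have "B \<notin> M'"
    using B_disj by blast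
  moreover have "finite M'"
    using M'(1) finite_matching finite_sigma_hg by blast
  moreover have "j < hi i" if "(i, j) \<in> \<Union>(insert B M')" for i j
  proof (cases "(i, j) \<in> B")
    case True
    then show ?thesis by (simp add: B_def band_def)
  next
    case False
    then have "j < lo i"
      using that below_lo by blast
    also have "lo i \<le> hi i"
      unfolding lo_def hi_def by (intro div_le_mono card_mono) (auto simp: sclass_def)
    finally show ?thesis .
  qed
  ultimately show ?case
    using matching_insertI[OF M'(1) B B_disj] M'(2) insert.hyps
    by (intro exI[of _ "insert B M'"]) (auto simp: hi_def)
qed

lemma matching_compress:
  assumes "matching (sigma_hg n r q \<sigma>) M" "0 < r div d" "\<forall>a\<in>#\<sigma>. d dvd a"
  shows "\<exists>M'. matching (sigma_hg n (r div d) (q div d) (image_mset (\<lambda>a. a div d) \<sigma>)) M'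
           \<and> card M' = card M"
  using matching_compress_stacked[OF assms] by blast

theorem lemma3p5:
  fixes n r q m t d :: nat and \<sigma> :: "nat multiset"
  assumes "is_partition \<sigma> r"
    and "d = Gcd (set_mset \<sigma>)" and "d \<ge> 2"
    and "q = m * d + t" and "t \<le> d - 1"
  defines "H \<equiv> sigma_hg n r q \<sigma>"
    and "Hm \<equiv> sigma_hg n r (m * d) \<sigma>"
    and "Hs \<equiv> sigma_hg n (r div d) m (image_mset (\<lambda>a. a div d) \<sigma>)"
  shows "(\<forall>M. max_matching H M \<longrightarrow> (\<exists>Ms. matching Hs Ms \<and> card Ms = card M))
       \<and> (\<forall>Ms. max_matching Hs Ms \<longrightarrow> (\<exists>M. matching H M \<and> card M = card Ms))
       \<and> nu H = nu Hm \<and> nu Hm = nu Hs"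
proof -
  have dvd: "\<forall>a\<in>#\<sigma>. d dvd a" and "0 < d" and "\<sigma> \<noteq> {#}"
    using assms(2,3) by auto
  then have "0 < r div d"
    using assms(1) by (intro div_pos_if_dvd_partition)
  moreover have "q div d = m"
    using assms(3-5) by simp
  ultimately have to_Hs: "\<exists>M'. matching Hs M' \<and> card M' = card M" if "matching H M" for M
    using matching_compress[OF that[unfolded H_def] _ dvd] by (simp add: Hs_def)
  have to_Hm: "\<exists>M. matching Hm M \<and> card M = card M'" if "matching Hs M'" for M'
    using matching_expand[OF \<open>0 < d\<close> dvd _ that[unfolded Hs_def]] assms(1)
    by (simp add: Hm_def is_partition_def)
  have "Hm \<subseteq> H"
    unfolding H_def Hm_def using assms(4) by (intro sigma_hg_mono) simp
  have fin: "finite H" "finite Hm" "finite Hs"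
    by (simp_all add: H_def Hm_def Hs_def finite_sigma_hg)
  have "nu H \<le> nu Hs" "nu Hs \<le> nu Hm"
    using nu_le_nu[OF fin(1,3) to_Hs] nu_le_nu[OF fin(3,2) to_Hm] by blast+
  moreover have "nu Hm \<le> nu H"
    using matching_mono[OF \<open>Hm \<subseteq> H\<close>] by (intro nu_le_nu[OF fin(2,1)]) blast
  moreover have "\<exists>M. matching H M \<and> card M = card M'" if "matching Hs M'" for M'
    using to_Hm[OF that] matching_mono[OF \<open>Hm \<subseteq> H\<close>] by blast
  ultimately show ?thesis
    using to_Hs by (auto simp: max_matching_def)
qed

end
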